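(* Let $\delta>0$ and let $(T_N)_{N\in\mathbb{N}}$ be a sequence with $T_N\in2\mathbb{N}$, $T_N\le N$, $T_N\to\infty$ and $T_N-\frac{\log N}{c_\delta}\to+\infty$ as $N\to\infty$. Then the laws of $S_N$ under $\mathbf P^{T_N}_{N,\delta}$ are tight: $$\lim_{L\to\infty}\sup_{N\in\mathbb{N}}\mathbf P^{T_N}_{N,\delta}(|S_N|>L)=0.$$
   Context: $(S_n)_{n\ge0}$ is the simple symmetric random walk on $\mathbb{Z}$ started at $0$, with law $\mathbf P$. For $T\in2\mathbb{N}$, $N\in\mathbb{N}$, $\delta\in\mathbb{R}$, the polymer measure $\mathbf P^T_{N,\delta}$ is defined by $\frac{d\mathbf P^T_{N,\delta}}{d\mathbf P}(S)=\frac{\exp(\delta\sum_{i=1}^N\mathbf 1_{\{S_i\in T\mathbb Z\}})}{Z^T_{N,\delta}}$, with $Z^T_{N,\delta}$ the normalizing constant. The constant $c_\delta:=\frac{\delta}{2}+\log\sqrt{2-e^{-\delta}}$. *)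

theory Defs
  imports Complex_Main
begin

text \<open>Paths of the simple random walk up to time N, encoded by their increments
  (a list of N steps, each in {-1,1}); under P every such path has probability 2^(-N).\<close>
definition srw_paths :: "nat \<Rightarrow> int list set" where
  "srw_paths N = {xs. length xs = N \<and> set xs \<subseteq> {-1, 1}}"

definition walk_pos :: "int list \<Rightarrow> nat \<Rightarrow> int" where
  "walk_pos xs i = sum_list (take i xs)"

definition polymer_weight :: "nat \<Rightarrow> nat \<Rightarrow> real \<Rightarrow> int list \<Rightarrow> real" where
  "polymer_weight T N \<delta> xs =
     exp (\<delta> * real (card {i \<in> {1..N}. int T dvd walk_pos xs i}))"

definition polymer_Z :: "nat \<Rightarrow> nat \<Rightarrow> real \<Rightarrow> real" where
  "polymer_Z T N \<delta> = (\<Sum>xs\<in>srw_paths N. polymer_weight T N \<delta> xs) / 2 ^ N"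

definition polymer_prob :: "nat \<Rightarrow> nat \<Rightarrow> real \<Rightarrow> (int list \<Rightarrow> bool) \<Rightarrow> real" where
  "polymer_prob T N \<delta> A =
     ((\<Sum>xs\<in>{xs\<in>srw_paths N. A xs}. polymer_weight T N \<delta> xs) / 2 ^ N) / polymer_Z T N \<delta>"

definition c_delta :: "real \<Rightarrow> real" where
  "c_delta \<delta> = \<delta> / 2 + ln (sqrt (2 - exp (- \<delta>)))"

end

theory Submission
  imports Defs
begin

(*
  Write wexp n f for the unnormalised polymer expectation of f(S_n).  It satisfies the
  transfer recursion wexp (n+1) f = wexp n (Q f), where Q f z = e(z-1) f(z-1) + e(z+1) f(z+1)
  and e = exp delta on T Z, 1 elsewhere.  Hence a sub-solution (Q h >= r h) gives the lower
  bound wexp n h >= r^n h(0), and a super-solution (e(y) (G(y-1) + G(y+1)) <= r G(y))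
  dominates the kernel wexp n 1_{y} by r^n G(y).

  With q = exp (-c_delta) and rho = (q + 1/q)/2 = exp delta * q we build
   (1) a T-periodic sub-solution of rate 2 rho, so the partition function is >= (2 rho)^N q/rho;
   (2) a super-solution of rate 2 rho (1 + eta_T), where eta_T is of order q^T, which decays by
       a factor s per period in |y|; it bounds the numerator of P(|S_N| > L) by
       (2 rho (1 + eta_T))^N times a tail sum beyond L.
  Dividing gives P(|S_N| > L) <= (1 + eta_T)^N (rho/q) 2 tail(s, L).  The growth hypothesis on
  T_N makes N eta <= 1 for large N, so (1 + eta)^N <= e; the tail is made small by choosing s
  and then L, and small N are trivial since |S_N| <= N.
*)

definition contact_factor :: "nat \<Rightarrow> real \<Rightarrow> int \<Rightarrow> real" where
  "contact_factor T \<delta> z = (if int T dvd z then exp \<delta> else 1)"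

definition wexp :: "nat \<Rightarrow> real \<Rightarrow> nat \<Rightarrow> (int \<Rightarrow> real) \<Rightarrow> real" where
  "wexp T \<delta> n f = (\<Sum>xs\<in>srw_paths n. polymer_weight T n \<delta> xs * f (walk_pos xs n))"

definition transfer :: "nat \<Rightarrow> real \<Rightarrow> (int \<Rightarrow> real) \<Rightarrow> int \<Rightarrow> real" where
  "transfer T \<delta> f z =
     contact_factor T \<delta> (z - 1) * f (z - 1) + contact_factor T \<delta> (z + 1) * f (z + 1)"

lemma finite_srw_paths: "finite (srw_paths n)"
proof -
  have "srw_paths n = {xs. set xs \<subseteq> {-1, 1} \<and> length xs = n}"
    by (auto simp: srw_paths_def)
  then show ?thesis
    using finite_lists_length_eq[of "{-1, 1 :: int}" n] by simp
qed

lemma srw_paths_0: "srw_paths 0 = {[]}"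
  by (auto simp: srw_paths_def)

lemma srw_paths_Suc:
  "srw_paths (Suc n) = (\<lambda>(xs, s). xs @ [s]) ` (srw_paths n \<times> {-1, 1})"
proof
  show "srw_paths (Suc n) \<subseteq> (\<lambda>(xs, s). xs @ [s]) ` (srw_paths n \<times> {-1, 1})"
  proof
    fix ys assume "ys \<in> srw_paths (Suc n)"
    then have len: "length ys = Suc n" and steps: "set ys \<subseteq> {-1, 1}"
      by (auto simp: srw_paths_def)
    then obtain xs s where ys: "ys = xs @ [s]"
      by (metis length_Suc_conv_rev)
    show "ys \<in> (\<lambda>(xs, s). xs @ [s]) ` (srw_paths n \<times> {-1, 1})"
      using len steps unfolding ys by (auto simp: srw_paths_def image_iff)
  qed
qed (auto simp: srw_paths_def)

lemma walk_pos_snoc: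
  assumes "length xs = n"
  shows "i \<le> n \<Longrightarrow> walk_pos (xs @ [s]) i = walk_pos xs i"
    and "walk_pos (xs @ [s]) (Suc n) = walk_pos xs n + s"
  using assms by (simp_all add: walk_pos_def)

lemma walk_pos_bound:
  assumes "xs \<in> srw_paths n"
  shows "\<bar>walk_pos xs n\<bar> \<le> int n"
proof -
  have "set ys \<subseteq> {-1, 1} \<Longrightarrow> \<bar>sum_list ys\<bar> \<le> int (length ys)" for ys :: "int list"
    by (induction ys) auto
  then show ?thesis
    using assms unfolding walk_pos_def srw_paths_def by (auto dest: in_set_takeD)
qed

lemma polymer_weight_pos: "0 < polymer_weight T n \<delta> xs"
  by (simp add: polymer_weight_def)

lemma polymer_weight_snoc:
  assumes "length xs = n"
  shows "polymer_weight T (Suc n) \<delta> (xs @ [s]) =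
           polymer_weight T n \<delta> xs * contact_factor T \<delta> (walk_pos xs n + s)"
proof -
  let ?contact = "\<lambda>i. int T dvd walk_pos (xs @ [s]) i"
  let ?old = "{i \<in> {1..n}. int T dvd walk_pos xs i}"
  have contacts: "{i \<in> {1..Suc n}. ?contact i} =
                    (if ?contact (Suc n) then insert (Suc n) ?old else ?old)"
    using assms by (auto simp: walk_pos_snoc le_Suc_eq)
  show ?thesis
    unfolding polymer_weight_def contact_factor_def contacts
    using walk_pos_snoc(2)[OF assms, of s]
    by (auto simp: card_insert_if distrib_left exp_add)
qed

lemma wexp_0: "wexp T \<delta> 0 f = f 0"
  by (simp add: wexp_def srw_paths_0 polymer_weight_def walk_pos_def)

lemma wexp_Suc: "wexp T \<delta> (Suc n) f = wexp T \<delta> n (transfer T \<delta> f)"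
proof -
  have inj: "inj_on (\<lambda>(xs, s). xs @ [s]) (srw_paths n \<times> {-1, 1 :: int})"
    by (auto simp: inj_on_def)
  have "wexp T \<delta> (Suc n) f =
          (\<Sum>(xs, s)\<in>srw_paths n \<times> {-1, 1}.
             polymer_weight T (Suc n) \<delta> (xs @ [s]) * f (walk_pos (xs @ [s]) (Suc n)))"
    unfolding wexp_def srw_paths_Suc by (subst sum.reindex[OF inj]) (simp add: case_prod_unfold)
  also have "\<dots> = (\<Sum>xs\<in>srw_paths n. \<Sum>s\<in>{-1, 1}. polymer_weight T n \<delta> xs *
                     (contact_factor T \<delta> (walk_pos xs n + s) * f (walk_pos xs n + s)))"
    unfolding sum.cartesian_product[symmetric]
    by (intro sum.cong refl) (auto simp: polymer_weight_snoc walk_pos_snoc srw_paths_def)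
  also have "\<dots> = wexp T \<delta> n (transfer T \<delta> f)"
    unfolding wexp_def transfer_def by (intro sum.cong refl) (simp add: algebra_simps)
  finally show ?thesis .
qed

lemma wexp_mono: "(\<And>z. f z \<le> g z) \<Longrightarrow> wexp T \<delta> n f \<le> wexp T \<delta> n g"
  unfolding wexp_def by (intro sum_mono mult_left_mono) (auto intro: less_imp_le polymer_weight_pos)

lemma wexp_nonneg: "(\<And>z. 0 \<le> f z) \<Longrightarrow> 0 \<le> wexp T \<delta> n f"
  using wexp_mono[of "\<lambda>_. 0" f] by (simp add: wexp_def)

lemma wexp_scale: "wexp T \<delta> n (\<lambda>z. a * f z) = a * wexp T \<delta> n f"
  unfolding wexp_def by (simp add: sum_distrib_left algebra_simps)

lemma wexp_add: "wexp T \<delta> n (\<lambda>z. f z + g z) = wexp T \<delta> n f + wexp T \<delta> n g"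
  unfolding wexp_def by (simp add: sum.distrib algebra_simps)

lemma polymer_prob_eq_wexp:
  "polymer_prob T N \<delta> (\<lambda>xs. P (walk_pos xs N)) =
     wexp T \<delta> N (\<lambda>y. if P y then 1 else 0) / wexp T \<delta> N (\<lambda>_. 1)"
  unfolding polymer_prob_def polymer_Z_def wexp_def
  by (simp add: sum.inter_filter[OF finite_srw_paths] if_distrib cong: if_cong)

lemma wexp_subharmonic_lower:
  assumes "\<And>z. r * h z \<le> transfer T \<delta> h z" and "0 \<le> r"
  shows "r ^ n * h 0 \<le> wexp T \<delta> n h"
proof (induction n)
  case 0
  show ?case by (simp add: wexp_0)
next
  case (Suc n)
  have "r ^ Suc n * h 0 = r * (r ^ n * h 0)" by simp
  also have "\<dots> \<le> r * wexp T \<delta> n h" using Suc assms(2) by (rule mult_left_mono)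
  also have "\<dots> = wexp T \<delta> n (\<lambda>z. r * h z)" by (simp add: wexp_scale)
  also have "\<dots> \<le> wexp T \<delta> n (transfer T \<delta> h)" by (intro wexp_mono assms(1))
  also have "\<dots> = wexp T \<delta> (Suc n) h" by (simp add: wexp_Suc)
  finally show ?case .
qed

definition kernel :: "nat \<Rightarrow> real \<Rightarrow> nat \<Rightarrow> int \<Rightarrow> real" where
  "kernel T \<delta> n y = wexp T \<delta> n (\<lambda>z. if z = y then 1 else 0)"

lemma kernel_0: "kernel T \<delta> 0 y = (if y = 0 then 1 else 0)"
  by (simp add: kernel_def wexp_0)

lemma kernel_Suc:
  "kernel T \<delta> (Suc n) y = contact_factor T \<delta> y * (kernel T \<delta> n (y - 1) + kernel T \<delta> n (y + 1))"
proof -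
  have "transfer T \<delta> (\<lambda>z. if z = y then 1 else 0) =
          (\<lambda>z. contact_factor T \<delta> y * (if z = y - 1 then 1 else 0) +
               contact_factor T \<delta> y * (if z = y + 1 then 1 else 0))"
    by (auto simp: transfer_def fun_eq_iff)
  then show ?thesis
    unfolding kernel_def wexp_Suc by (simp add: wexp_add wexp_scale algebra_simps)
qed

lemma kernel_superharmonic_upper:
  assumes G_nonneg: "\<And>y. 0 \<le> G y" and G_0: "1 \<le> G 0"
    and super: "\<And>y. contact_factor T \<delta> y * (G (y - 1) + G (y + 1)) \<le> r * G y"
    and "0 \<le> r"
  shows "kernel T \<delta> n y \<le> r ^ n * G y"
proof (induction n arbitrary: y)
  case 0
  show ?case using G_nonneg G_0 by (simp add: kernel_0)
next
  case (Suc n)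
  have "0 \<le> contact_factor T \<delta> y" by (simp add: contact_factor_def)
  then have "kernel T \<delta> (Suc n) y \<le> contact_factor T \<delta> y * (r ^ n * G (y - 1) + r ^ n * G (y + 1))"
    unfolding kernel_Suc using Suc by (intro mult_left_mono add_mono) auto
  also have "\<dots> = r ^ n * (contact_factor T \<delta> y * (G (y - 1) + G (y + 1)))"
    by (simp add: algebra_simps)
  also have "\<dots> \<le> r ^ n * (r * G y)" using super \<open>0 \<le> r\<close> by (intro mult_left_mono) auto
  finally show ?case by (simp add: algebra_simps)
qed

lemma wexp_kernel_decomp:
  "wexp T \<delta> n f = (\<Sum>y\<in>{-int n..int n}. f y * kernel T \<delta> n y)"
proof -
  have "(\<Sum>y\<in>{-int n..int n}. f y * kernel T \<delta> n y) =
          (\<Sum>xs\<in>srw_paths n. \<Sum>y\<in>{-int n..int n}.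
             polymer_weight T n \<delta> xs * (if walk_pos xs n = y then f y else 0))"
    unfolding kernel_def wexp_def
    by (subst sum.swap) (simp add: sum_distrib_left algebra_simps if_distrib cong: if_cong)
  also have "\<dots> = wexp T \<delta> n f"
    unfolding wexp_def
  proof (intro sum.cong refl)
    fix xs assume "xs \<in> srw_paths n"
    then have "walk_pos xs n \<in> {-int n..int n}"
      using walk_pos_bound[of xs n] by auto
    then show "(\<Sum>y\<in>{-int n..int n}. polymer_weight T n \<delta> xs * (if walk_pos xs n = y then f y else 0)) =
                 polymer_weight T n \<delta> xs * f (walk_pos xs n)"
      by (simp add: if_distrib[of "\<lambda>x. polymer_weight T n \<delta> xs * x"] cong: if_cong)
  qed
  finally show ?thesis ..
qed


lemma mod_succ_int:
  fixes y m :: int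
  assumes "0 < m"
  shows "(y + 1) mod m = (if y mod m + 1 = m then 0 else y mod m + 1)"
proof -
  have "(y + 1) mod m = (y mod m + 1) mod m" by (simp add: mod_add_left_eq)
  then show ?thesis using pos_mod_bound[OF assms, of y] pos_mod_sign[OF assms, of y]
    by (auto simp: mod_pos_pos_trivial)
qed

lemma mod_pred_int:
  fixes y m :: int
  assumes "0 < m"
  shows "(y - 1) mod m = (if y mod m = 0 then m - 1 else y mod m - 1)"
proof -
  have "(y - 1) mod m = (y mod m - 1) mod m" by (simp add: mod_diff_left_eq)
  moreover have "0 \<le> y mod m" "y mod m < m" using assms by simp_all
  ultimately show ?thesis using assms
    by (cases "y mod m = 0") (simp_all add: zmod_minus1 mod_pos_pos_trivial)
qed

text \<open>Profile of an excursion between two consecutive contact lines, r = distance to the lower one.\<close>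
definition between_profile :: "nat \<Rightarrow> real \<Rightarrow> nat \<Rightarrow> real" where
  "between_profile T q r = q ^ r + q ^ (T - r)"

definition residue_profile :: "nat \<Rightarrow> real \<Rightarrow> int \<Rightarrow> real" where
  "residue_profile T q y = between_profile T q (nat (y mod int T))"

lemma between_profile_rec:
  assumes "Suc (Suc j) \<le> T" and "0 < q"
  shows "between_profile T q j + between_profile T q (Suc (Suc j)) =
           (q + 1/q) * between_profile T q (Suc j)"
proof -
  obtain m where T: "T = Suc (Suc j) + m" using assms(1) le_Suc_ex by blast
  then have "T - j = Suc (Suc m)" "T - Suc j = Suc m" "T - Suc (Suc j) = m" by auto
  then show ?thesis unfolding between_profile_def using assms(2) by (simp add: field_simps)
qed

lemma between_profile_le_0:
  assumes "r \<le> T" and "0 \<le> q" and "q \<le> 1"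
  shows "between_profile T q r \<le> between_profile T q 0"
proof -
  have "0 \<le> (1 - q ^ r) * (1 - q ^ (T - r))"
    using assms by (intro mult_nonneg_nonneg) (auto simp: power_le_one)
  moreover have "q ^ r * q ^ (T - r) = q ^ T" using assms(1) by (simp flip: power_add)
  ultimately show ?thesis unfolding between_profile_def by (simp add: algebra_simps)
qed

lemma residue_profile_neighbours:
  assumes "0 < T" and "0 < q"
  shows "residue_profile T q (y - 1) + residue_profile T q (y + 1) =
           (if int T dvd y then 2 * between_profile T q 1
            else (q + 1/q) * residue_profile T q y)"
proof -
  define r where "r = nat (y mod int T)"
  have r_less: "r < T" and r_eq: "int r = y mod int T"
    using assms(1) by (simp_all add: r_def nat_less_iff)
  have "nat ((y + 1) mod int T) = (if Suc r = T then 0 else Suc r)"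
    using assms(1) by (simp add: mod_succ_int nat_add_distrib flip: r_eq)
  then have succ: "residue_profile T q (y + 1) = between_profile T q (Suc r)"
    unfolding residue_profile_def by (auto simp: between_profile_def)
  have "nat ((y - 1) mod int T) = (if r = 0 then T - 1 else r - 1)"
    using assms(1) by (simp add: mod_pred_int of_nat_diff nat_diff_distrib flip: r_eq)
  then have pred: "residue_profile T q (y - 1) =
                     between_profile T q (if r = 0 then T - 1 else r - 1)"
    unfolding residue_profile_def by simp
  have contact: "int T dvd y \<longleftrightarrow> r = 0"
    using r_eq by (auto simp: dvd_eq_mod_eq_0)
  have here: "residue_profile T q y = between_profile T q r"
    by (simp add: residue_profile_def r_def)
  show ?thesis
  proof (cases r)
    case 0
    have "between_profile T q (T - 1) = between_profile T q 1"
      using assms(1) by (simp add: between_profile_def)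
    then show ?thesis using 0 succ pred contact by simp
  next
    case (Suc j)
    then show ?thesis
      using succ pred contact here r_less between_profile_rec[of j T q] assms(2) by simp
  qed
qed


text \<open>The decay rate q < 1 is tied to the reward by exp delta * q = rho = (q + 1/q)/2; this is
  exactly the equation solved by q = exp (-c_delta delta).\<close>
locale contact_regime =
  fixes T :: nat and q \<rho> \<delta> :: real
  assumes T_ge_2: "2 \<le> T" and q_pos: "0 < q" and q_less_1: "q < 1"
    and rho_def: "\<rho> = (q + 1/q) / 2"
    and exp_delta: "exp \<delta> * q = \<rho>"
begin

lemma rho_pos: "0 < \<rho>"
  using q_pos by (simp add: rho_def add_pos_pos)

lemma q_le_rho: "q \<le> \<rho>"
proof -
  have "q * q \<le> 1" using q_pos q_less_1 by (simp add: mult_le_one)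
  then have "q \<le> 1/q" using q_pos by (simp add: field_simps)
  then show ?thesis by (simp add: rho_def)
qed

definition lower_profile :: "int \<Rightarrow> real" where
  "lower_profile y = (if int T dvd y then q / \<rho> else 1) * residue_profile T q y"

lemma contact_factor_lower_profile:
  "contact_factor T \<delta> z * lower_profile z = residue_profile T q z"
  using exp_delta rho_pos by (auto simp: contact_factor_def lower_profile_def field_simps)

lemma lower_profile_subharmonic:
  "2 * \<rho> * lower_profile y \<le> transfer T \<delta> lower_profile y"
proof -
  have neighbours: "transfer T \<delta> lower_profile y =
                      residue_profile T q (y - 1) + residue_profile T q (y + 1)"
    by (simp add: transfer_def contact_factor_lower_profile)
  show ?thesis
  proof (cases "int T dvd y")
    case True
    then have "residue_profile T q y = between_profile T q 0"
      by (simp add: residue_profile_def dvd_eq_mod_eq_0)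
    moreover have "q * between_profile T q 0 \<le> between_profile T q 1"
    proof -
      have "q ^ Suc T \<le> q ^ (T - 1)"
        using q_pos q_less_1 by (intro power_decreasing) auto
      then show ?thesis using T_ge_2 by (simp add: between_profile_def algebra_simps)
    qed
    ultimately show ?thesis
      using True rho_pos T_ge_2 q_pos
      by (simp add: neighbours residue_profile_neighbours lower_profile_def)
  next
    case False
    have "2 * \<rho> = q + 1/q" by (simp add: rho_def)
    then show ?thesis
      using False T_ge_2 q_pos
      by (simp add: neighbours residue_profile_neighbours lower_profile_def)
  qed
qed

lemma lower_profile_le: "lower_profile y \<le> between_profile T q 0"
proof -
  have "y mod int T < int T" using T_ge_2 by simp
  then have "residue_profile T q y \<le> between_profile T q 0"
    unfolding residue_profile_def using q_pos q_less_1
    by (intro between_profile_le_0) (auto simp: nat_le_iff)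
  moreover have "0 \<le> residue_profile T q y"
    using q_pos by (simp add: residue_profile_def between_profile_def)
  moreover have "q / \<rho> \<le> 1" using q_le_rho rho_pos by simp
  ultimately show ?thesis
    unfolding lower_profile_def using mult_right_mono[of "q / \<rho>" 1] by force
qed

lemma partition_lower: "(2 * \<rho>) ^ n * (q / \<rho>) \<le> wexp T \<delta> n (\<lambda>_. 1)"
proof -
  define B where "B = between_profile T q 0"
  have B_pos: "0 < B" using q_pos by (simp add: B_def between_profile_def add_pos_pos)
  have "lower_profile 0 = q / \<rho> * B"
    by (simp add: lower_profile_def residue_profile_def B_def)
  then have "(2 * \<rho>) ^ n * (q / \<rho> * B) \<le> wexp T \<delta> n lower_profile"
    using lower_profile_subharmonic rho_pos
    by (metis less_imp_le mult_nonneg_nonneg zero_le_numeral wexp_subharmonic_lower)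
  also have "\<dots> \<le> wexp T \<delta> n (\<lambda>_. B * 1)"
    by (intro wexp_mono) (simp add: lower_profile_le B_def)
  also have "\<dots> = B * wexp T \<delta> n (\<lambda>_. 1)" by (rule wexp_scale)
  finally have "B * ((2 * \<rho>) ^ n * (q / \<rho>)) \<le> B * wexp T \<delta> n (\<lambda>_. 1)"
    by (simp only: mult_ac)
  then show ?thesis using B_pos by (simp only: mult_le_cancel_left_pos)
qed

end


text \<open>Excursion profile with a damped return term: s weights the far contact line.\<close>
definition excursion_profile :: "nat \<Rightarrow> real \<Rightarrow> real \<Rightarrow> nat \<Rightarrow> real" where
  "excursion_profile T q s r = q ^ r + s * q ^ (T - r)"

definition decay_profile :: "nat \<Rightarrow> real \<Rightarrow> real \<Rightarrow> nat \<Rightarrow> real" where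
  "decay_profile T q s a =
     (if a mod T = 0 then s ^ (a div T) else s ^ (a div T) * excursion_profile T q s (a mod T))"

definition upper_profile :: "nat \<Rightarrow> real \<Rightarrow> real \<Rightarrow> int \<Rightarrow> real" where
  "upper_profile T q s y = decay_profile T q s (nat \<bar>y\<bar>)"

text \<open>Relative error at the contact lines; of order q^T, hence negligible for T large.\<close>
definition contact_excess :: "nat \<Rightarrow> real \<Rightarrow> real \<Rightarrow> real" where
  "contact_excess T q s = q ^ (T - 2) * (s + 1/s) / 2"

locale damping =
  fixes T :: nat and q s :: real
  assumes T_ge_2: "2 \<le> T" and q_pos: "0 < q" and q_less_1: "q < 1"
    and s_pos: "0 < s" and s_le_1: "s \<le> 1"
begin

lemma excursion_profile_rec:
  assumes "Suc (Suc j) \<le> T"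
  shows "excursion_profile T q s j + excursion_profile T q s (Suc (Suc j)) =
           (q + 1/q) * excursion_profile T q s (Suc j)"
proof -
  obtain m where "T = Suc (Suc j) + m" using assms le_Suc_ex by blast
  then have "T - j = Suc (Suc m)" "T - Suc j = Suc m" "T - Suc (Suc j) = m" by auto
  then show ?thesis unfolding excursion_profile_def using q_pos by (simp add: field_simps)
qed

lemma excursion_profile_nonneg: "0 \<le> excursion_profile T q s r"
  using q_pos s_pos by (simp add: excursion_profile_def)

lemma decay_profile_split:
  assumes "r < T"
  shows "decay_profile T q s (k * T + r) =
           (if r = 0 then s ^ k else s ^ k * excursion_profile T q s r)"
  using assms by (simp add: decay_profile_def)

lemma decay_profile_nonneg: "0 \<le> decay_profile T q s a"
  using s_pos excursion_profile_nonneg by (simp add: decay_profile_def)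

text \<open>Right at a contact line the profile is s^k, which is at most s^k times the excursion value.\<close>
lemma decay_profile_le_excursion:
  assumes "r < T"
  shows "decay_profile T q s (k * T + r) \<le> s ^ k * excursion_profile T q s r"
proof (cases "r = 0")
  case True
  have "1 \<le> excursion_profile T q s 0" using q_pos s_pos by (simp add: excursion_profile_def)
  then have "s ^ k * 1 \<le> s ^ k * excursion_profile T q s 0" using s_pos by (intro mult_left_mono) auto
  then show ?thesis using True decay_profile_split[OF assms, of k] by simp
qed (use assms in \<open>simp add: decay_profile_split\<close>)

lemma decay_profile_noncontact:
  assumes "a mod T \<noteq> 0"
  shows "decay_profile T q s (a - 1) + decay_profile T q s (a + 1) \<le>
           (q + 1/q) * decay_profile T q s a"
proof -
  define k where "k = a div T"
  define r where "r = a mod T"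
  have a: "a = k * T + r" and r_less: "r < T" using T_ge_2 by (simp_all add: k_def r_def)
  obtain j where j: "r = Suc j" using assms r_def by (metis not0_implies_Suc)
  have below: "decay_profile T q s (a - 1) \<le> s ^ k * excursion_profile T q s j"
    using decay_profile_le_excursion[of j k] a j r_less by simp
  have above: "decay_profile T q s (a + 1) \<le> s ^ k * excursion_profile T q s (Suc (Suc j))"
  proof (cases "Suc (Suc j) = T")
    case True
    then have "a + 1 = Suc k * T + 0" using a j by simp
    then have "decay_profile T q s (a + 1) = s ^ k * s"
      using T_ge_2 by (simp only: decay_profile_split) simp
    also have "\<dots> \<le> s ^ k * excursion_profile T q s (Suc (Suc j))"
      using True s_pos q_pos by (intro mult_left_mono) (auto simp: excursion_profile_def)
    finally show ?thesis .
  next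
    case False
    then show ?thesis
      using a j r_less decay_profile_le_excursion[of "Suc (Suc j)" k] by simp
  qed
  have "decay_profile T q s (a - 1) + decay_profile T q s (a + 1) \<le>
          s ^ k * (excursion_profile T q s j + excursion_profile T q s (Suc (Suc j)))"
    using below above by (simp add: algebra_simps)
  also have "\<dots> = (q + 1/q) * (s ^ k * excursion_profile T q s (Suc j))"
    using excursion_profile_rec[of j] r_less j by simp
  also have "s ^ k * excursion_profile T q s (Suc j) = decay_profile T q s a"
    using a j r_less decay_profile_split[of r k] by simp
  finally show ?thesis .
qed

lemma decay_profile_contact:
  assumes "a mod T = 0" and "1 \<le> a"
  shows "(decay_profile T q s (a - 1) + decay_profile T q s (a + 1)) / q =
           2 * (1 + contact_excess T q s) * decay_profile T q s a"
proof -
  obtain k where k: "a = Suc k * T"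
    using assms by (metis mult.commute mult_div_mod_eq add_0_right not0_implies_Suc
        mult_is_0 not_one_le_zero)
  obtain m where m: "T = Suc (Suc m)" using T_ge_2 by (metis add_2_eq_Suc le_Suc_ex)
  have below: "a - 1 = k * T + Suc m" and above: "a + 1 = Suc k * T + 1"
    and here: "a = Suc k * T + 0"
    using k m by simp_all
  have "decay_profile T q s (a - 1) = s ^ k * (q ^ Suc m + s * q)"
    unfolding below by (subst decay_profile_split) (auto simp: m excursion_profile_def)
  moreover have "decay_profile T q s (a + 1) = s ^ Suc k * (q + s * q ^ Suc m)"
    unfolding above by (subst decay_profile_split) (auto simp: m excursion_profile_def)
  moreover have "decay_profile T q s a = s ^ Suc k"
    unfolding here by (subst decay_profile_split) (auto simp: m)
  ultimately show ?thesis
    using q_pos s_pos by (simp add: contact_excess_def m field_simps power2_eq_square)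
qed

lemma contact_excess_nonneg: "0 \<le> contact_excess T q s"
  using q_pos s_pos by (simp add: contact_excess_def)

lemma upper_profile_nonneg: "0 \<le> upper_profile T q s y"
  by (simp add: upper_profile_def decay_profile_nonneg)

lemma upper_profile_0: "upper_profile T q s 0 = 1"
  by (simp add: upper_profile_def decay_profile_def)

lemma upper_profile_neighbours:
  assumes "y \<noteq> 0"
  shows "upper_profile T q s (y - 1) + upper_profile T q s (y + 1) =
           decay_profile T q s (nat \<bar>y\<bar> - 1) + decay_profile T q s (nat \<bar>y\<bar> + 1)"
proof (cases "0 < y")
  case True
  then have "nat \<bar>y - 1\<bar> = nat \<bar>y\<bar> - 1" "nat \<bar>y + 1\<bar> = nat \<bar>y\<bar> + 1" by auto
  then show ?thesis unfolding upper_profile_def by (simp only:)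
next
  case False
  then have "nat \<bar>y - 1\<bar> = nat \<bar>y\<bar> + 1" "nat \<bar>y + 1\<bar> = nat \<bar>y\<bar> - 1" using assms by auto
  then show ?thesis unfolding upper_profile_def by (simp only: add.commute)
qed

end


locale upper_regime = contact_regime T q \<rho> \<delta> + damping T q s
  for T :: nat and q \<rho> \<delta> s :: real
begin

lemma exp_delta_eq: "exp \<delta> = \<rho> / q"
  using exp_delta q_pos by (simp add: field_simps)

text \<open>At the origin the damping of the return term still keeps the excess below contact_excess.\<close>
lemma upper_profile_super_origin:
  "contact_factor T \<delta> 0 * (upper_profile T q s (-1) + upper_profile T q s 1) \<le>
     2 * \<rho> * (1 + contact_excess T q s) * upper_profile T q s 0"
proof -
  obtain m where m: "T = Suc (Suc m)" using T_ge_2 by (metis add_2_eq_Suc le_Suc_ex)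
  have neighbours: "upper_profile T q s (-1) = q + s * q ^ Suc m"
    "upper_profile T q s 1 = q + s * q ^ Suc m"
    by (auto simp: upper_profile_def decay_profile_def excursion_profile_def m)
  have "s \<le> 1/s" using s_pos s_le_1 by (simp add: field_simps mult_le_one)
  then have "q ^ m * s \<le> contact_excess T q s"
    using q_pos by (simp add: contact_excess_def m mult_left_mono)
  then have excess: "2 * \<rho> * (1 + q ^ m * s) \<le> 2 * \<rho> * (1 + contact_excess T q s)"
    using rho_pos by (intro mult_left_mono) auto
  have "contact_factor T \<delta> 0 * (upper_profile T q s (-1) + upper_profile T q s 1) =
          \<rho> / q * (2 * (q + s * q ^ Suc m))"
    by (simp add: contact_factor_def exp_delta_eq neighbours)
  also have "\<dots> = 2 * \<rho> * (1 + q ^ m * s)"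
    using q_pos by (simp add: field_simps)
  finally show ?thesis using excess by (simp add: upper_profile_0)
qed

lemma upper_profile_super:
  "contact_factor T \<delta> y * (upper_profile T q s (y - 1) + upper_profile T q s (y + 1)) \<le>
     2 * \<rho> * (1 + contact_excess T q s) * upper_profile T q s y"
proof (cases "y = 0")
  case True
  then show ?thesis using upper_profile_super_origin by simp
next
  case False
  define a where "a = nat \<bar>y\<bar>"
  have contact: "int T dvd y \<longleftrightarrow> a mod T = 0"
    unfolding a_def by (metis abs_ge_zero dvd_abs_iff int_nat_eq of_nat_dvd_iff dvd_eq_mod_eq_0)
  have here: "upper_profile T q s y = decay_profile T q s a"
    by (simp add: upper_profile_def a_def)
  show ?thesis
  proof (cases "a mod T = 0")
    case True
    have "1 \<le> a" using False a_def by simp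
    have "contact_factor T \<delta> y * (upper_profile T q s (y - 1) + upper_profile T q s (y + 1)) =
            \<rho> * ((decay_profile T q s (a - 1) + decay_profile T q s (a + 1)) / q)"
      using True contact upper_profile_neighbours[OF False]
      by (simp add: contact_factor_def exp_delta_eq a_def)
    also have "\<dots> = 2 * \<rho> * (1 + contact_excess T q s) * upper_profile T q s y"
      using decay_profile_contact[OF True \<open>1 \<le> a\<close>] here by simp
    finally show ?thesis by simp
  next
    case noncontact: False
    have "decay_profile T q s (a - 1) + decay_profile T q s (a + 1) \<le> 2 * \<rho> * decay_profile T q s a"
      using decay_profile_noncontact[OF noncontact] by (simp add: rho_def algebra_simps)
    also have "\<dots> \<le> 2 * \<rho> * (1 + contact_excess T q s) * decay_profile T q s a"
      using rho_pos contact_excess_nonneg decay_profile_nonneg[of a]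
      by (simp add: algebra_simps mult_nonneg_nonneg)
    finally show ?thesis
      using noncontact contact here upper_profile_neighbours[OF False]
      by (simp add: contact_factor_def a_def)
  qed
qed

lemma kernel_upper:
  "kernel T \<delta> n y \<le> (2 * \<rho> * (1 + contact_excess T q s)) ^ n * upper_profile T q s y"
  using upper_profile_nonneg upper_profile_0 upper_profile_super rho_pos contact_excess_nonneg
  by (intro kernel_superharmonic_upper) auto

end


lemma sum_symmetric_interval_le:
  fixes F :: "nat \<Rightarrow> real"
  assumes "\<And>a. 0 \<le> F a"
  shows "(\<Sum>y\<in>{-int n..int n}. F (nat \<bar>y\<bar>)) \<le> 2 * (\<Sum>a\<le>n. F a)"
proof (induction n)
  case 0
  show ?case using assms[of 0] by simp
next
  case (Suc n)
  have "{-int (Suc n)..int (Suc n)} = insert (int (Suc n)) (insert (- int (Suc n)) {-int n..int n})"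
    by auto
  moreover have "nat (int n + 1) = Suc n" "nat (1 + int n) = Suc n" by auto
  ultimately have "(\<Sum>y\<in>{-int (Suc n)..int (Suc n)}. F (nat \<bar>y\<bar>)) =
                     2 * F (Suc n) + (\<Sum>y\<in>{-int n..int n}. F (nat \<bar>y\<bar>))"
    by simp
  then show ?case using Suc by simp
qed

lemma geometric_partial_sum_le:
  fixes x :: real
  assumes "0 \<le> x" and "x < 1"
  shows "(\<Sum>i<n. x ^ i) \<le> 1 / (1 - x)"
proof -
  have "(\<Sum>i<n. x ^ i) = (1 - x ^ n) / (1 - x)" using assms by (simp add: sum_gp_strict)
  also have "\<dots> \<le> 1 / (1 - x)" using assms by (intro divide_right_mono) auto
  finally show ?thesis .
qed

lemma one_plus_pow_le_exp:
  fixes x :: real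
  assumes "0 \<le> x"
  shows "(1 + x) ^ n \<le> exp (real n * x)"
proof -
  have "(1 + x) ^ n \<le> exp x ^ n"
    using assms by (intro power_mono) (auto simp: add.commute)
  then show ?thesis by (simp add: exp_of_nat_mult)
qed

lemma sum_div_mod_regroup:
  fixes g :: "nat \<Rightarrow> nat \<Rightarrow> real"
  assumes "0 < T"
  shows "(\<Sum>a<M * T. g (a div T) (a mod T)) = (\<Sum>k<M. \<Sum>r<T. g k r)"
proof -
  have "(\<Sum>a<M * T. g (a div T) (a mod T)) =
          (\<Sum>k<M. \<Sum>a\<in>{k * T..<k * T + T}. g (a div T) (a mod T))"
    by (rule sum.nat_group[symmetric])
  also have "\<dots> = (\<Sum>k<M. \<Sum>r<T. g k r)"
  proof (rule sum.cong[OF refl])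
    fix k
    have "{k * T..<k * T + T} = (\<lambda>r. k * T + r) ` {..<T}"
      using image_add_atLeastLessThan'[of "k * T" 0 T] by (simp add: add.commute atLeast0LessThan)
    then show "(\<Sum>a\<in>{k * T..<k * T + T}. g (a div T) (a mod T)) = (\<Sum>r<T. g k r)"
      using assms by (simp add: sum.reindex inj_on_def)
  qed
  finally show ?thesis .
qed

lemma block_geometric_sum_le:
  fixes \<sigma> q :: real
  assumes "0 < T" and "0 < \<sigma>" and "\<sigma> < 1" and "0 \<le> q" and "q < 1"
  shows "(\<Sum>a<M * T. \<sigma> * \<sigma> ^ (a div T) * (q ^ (a mod T) + q ^ (T - Suc (a mod T))))
           \<le> \<sigma> / (1 - \<sigma>) * (2 / (1 - q))"
proof -
  have reflect: "(\<Sum>r<T. q ^ (T - Suc r)) = (\<Sum>r<T. q ^ r)" by (rule sum.nat_diff_reindex)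
  have "(\<Sum>a<M * T. \<sigma> * \<sigma> ^ (a div T) * (q ^ (a mod T) + q ^ (T - Suc (a mod T)))) =
          (\<Sum>k<M. \<Sum>r<T. \<sigma> * \<sigma> ^ k * (q ^ r + q ^ (T - Suc r)))"
    using sum_div_mod_regroup[OF assms(1)] .
  also have "\<dots> = (\<Sum>k<M. \<sigma> ^ k * (\<sigma> * (2 * (\<Sum>r<T. q ^ r))))"
  proof (rule sum.cong[OF refl])
    fix k
    have "(\<Sum>r<T. \<sigma> * \<sigma> ^ k * (q ^ r + q ^ (T - Suc r))) =
            \<sigma> * \<sigma> ^ k * (\<Sum>r<T. q ^ r + q ^ (T - Suc r))"
      by (rule sum_distrib_left[symmetric])
    then show "(\<Sum>r<T. \<sigma> * \<sigma> ^ k * (q ^ r + q ^ (T - Suc r))) =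
                 \<sigma> ^ k * (\<sigma> * (2 * (\<Sum>r<T. q ^ r)))"
      by (simp add: sum.distrib reflect)
  qed
  also have "\<dots> = \<sigma> * (\<Sum>k<M. \<sigma> ^ k) * (2 * (\<Sum>r<T. q ^ r))"
    by (simp add: sum_distrib_right[symmetric])
  also have "\<dots> \<le> \<sigma> * (1 / (1 - \<sigma>)) * (2 * (1 / (1 - q)))"
    using assms geometric_partial_sum_le[of \<sigma>] geometric_partial_sum_le[of q]
    by (intro mult_mono mult_left_mono) (auto intro!: sum_nonneg)
  finally show ?thesis by simp
qed

definition tail_constant :: "real \<Rightarrow> real \<Rightarrow> real \<Rightarrow> nat \<Rightarrow> real" where
  "tail_constant p q \<sigma> l = p ^ l / (1 - p) + \<sigma> / (1 - \<sigma>) * (2 / (1 - q))"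

text \<open>Square-root parametrisation q = p^2, s = sigma^2, which splits the tail into geometric pieces.\<close>
locale tail_profile =
  fixes T :: nat and q s p \<sigma> :: real
  assumes T_ge_2: "2 \<le> T" and p_pos: "0 < p" and p_less_1: "p < 1" and q_eq: "q = p ^ 2"
    and sigma_pos: "0 < \<sigma>" and sigma_less_1: "\<sigma> < 1" and s_eq: "s = \<sigma> ^ 2"

sublocale tail_profile \<subseteq> damping T q s
  using T_ge_2 p_pos p_less_1 sigma_pos sigma_less_1
  by unfold_locales (auto simp: q_eq s_eq power_less_one_iff power_le_one)

context tail_profile
begin

lemma decay_profile_tail_term:
  "(if l < a then decay_profile T q s a else 0) \<le>
     p ^ l * p ^ a + \<sigma> * \<sigma> ^ (a div T) * (q ^ (a mod T) + q ^ (T - Suc (a mod T)))"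
proof -
  define k where "k = a div T"
  define r where "r = a mod T"
  have r_less: "r < T" and a: "a = k * T + r" using T_ge_2 by (simp_all add: k_def r_def)
  have s_pow: "s ^ j \<le> \<sigma> * \<sigma> ^ i" if "Suc i \<le> 2 * j" for i j
  proof -
    have "s ^ j = \<sigma> ^ (2 * j)" by (simp add: s_eq power_mult)
    also have "\<dots> \<le> \<sigma> ^ Suc i" using that sigma_pos sigma_less_1 by (intro power_decreasing) auto
    finally show ?thesis by simp
  qed
  have reflected: "s ^ Suc k * q ^ (T - r) \<le> \<sigma> * \<sigma> ^ k * q ^ (T - Suc r)"
  proof -
    have "q ^ (T - r) \<le> q ^ (T - Suc r)" using q_pos q_less_1 by (intro power_decreasing) auto
    then show ?thesis using s_pow[of k "Suc k"] q_pos s_pos sigma_pos by (intro mult_mono) auto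
  qed
  have direct: "(if l < a then (if k = 0 then q ^ a else s ^ k * q ^ r) else 0) \<le>
                  p ^ l * p ^ a + \<sigma> * \<sigma> ^ k * q ^ r"
  proof (cases "l < a")
    case True
    have "q ^ a = p ^ a * p ^ a" by (simp add: q_eq flip: power_mult power_add mult_2)
    also have "\<dots> \<le> p ^ l * p ^ a"
      using True p_pos p_less_1 by (intro mult_right_mono power_decreasing) auto
    finally have "q ^ a \<le> p ^ l * p ^ a" .
    moreover have "0 < k \<Longrightarrow> s ^ k * q ^ r \<le> \<sigma> * \<sigma> ^ k * q ^ r"
      using s_pow[of k k] q_pos by (intro mult_right_mono) auto
    ultimately show ?thesis
      using True p_pos sigma_pos q_pos by (auto simp: add_increasing add_increasing2)
  qed (use p_pos sigma_pos q_pos in simp)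
  have "decay_profile T q s a \<le> s ^ k * excursion_profile T q s r"
    using decay_profile_le_excursion[OF r_less, of k] a by simp
  then have "decay_profile T q s a \<le> (if k = 0 then q ^ a else s ^ k * q ^ r) + s ^ Suc k * q ^ (T - r)"
    using a by (auto simp: excursion_profile_def algebra_simps)
  then have "(if l < a then decay_profile T q s a else 0) \<le>
               (if l < a then (if k = 0 then q ^ a else s ^ k * q ^ r) else 0) + s ^ Suc k * q ^ (T - r)"
    using s_pos q_pos by auto
  then show ?thesis
    using direct reflected unfolding k_def r_def by (simp add: algebra_simps)
qed

lemma tail_constant_nonneg: "0 \<le> tail_constant p q \<sigma> l"
  using p_pos p_less_1 sigma_pos sigma_less_1 q_less_1 by (simp add: tail_constant_def)

lemma decay_profile_tail_sum:
  "(\<Sum>a\<le>n. if l < a then decay_profile T q s a else 0) \<le> tail_constant p q \<sigma> l"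
proof -
  define M where "M = Suc (n div T)"
  have "n mod T < T" using T_ge_2 by simp
  moreover have "M * T = T + n div T * T" by (simp add: M_def)
  ultimately have "n < M * T" using div_mult_mod_eq[of n T] by linarith
  then have "(\<Sum>a\<le>n. if l < a then decay_profile T q s a else 0) \<le>
               (\<Sum>a<M * T. if l < a then decay_profile T q s a else 0)"
    using decay_profile_nonneg by (intro sum_mono2) auto
  also have "\<dots> \<le> (\<Sum>a<M * T. p ^ l * p ^ a +
                    \<sigma> * \<sigma> ^ (a div T) * (q ^ (a mod T) + q ^ (T - Suc (a mod T))))"
    by (intro sum_mono decay_profile_tail_term)
  also have "\<dots> = p ^ l * (\<Sum>a<M * T. p ^ a) +
                   (\<Sum>a<M * T. \<sigma> * \<sigma> ^ (a div T) * (q ^ (a mod T) + q ^ (T - Suc (a mod T))))"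
    by (simp add: sum.distrib sum_distrib_left)
  also have "\<dots> \<le> p ^ l * (1 / (1 - p)) + \<sigma> / (1 - \<sigma>) * (2 / (1 - q))"
    using p_pos p_less_1 T_ge_2 sigma_pos sigma_less_1 q_pos q_less_1
    by (intro add_mono mult_left_mono geometric_partial_sum_le block_geometric_sum_le) auto
  finally show ?thesis by (simp add: tail_constant_def)
qed

end


locale tail_regime = upper_regime T q \<rho> \<delta> s + tail_profile T q s p \<sigma>
  for T :: nat and q \<rho> \<delta> s p \<sigma> :: real
begin

lemma tail_wexp_bound:
  fixes L :: real
  assumes "real l \<le> L"
  shows "wexp T \<delta> N (\<lambda>y. if L < of_int \<bar>y\<bar> then 1 else 0) \<le>
           (2 * \<rho> * (1 + contact_excess T q s)) ^ N * (2 * tail_constant p q \<sigma> l)"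
proof -
  define R where "R = 2 * \<rho> * (1 + contact_excess T q s)"
  define F where "F a = (if l < a then decay_profile T q s a else 0)" for a
  have R_nonneg: "0 \<le> R" using rho_pos contact_excess_nonneg by (simp add: R_def)
  have F_nonneg: "0 \<le> F a" for a by (simp add: F_def decay_profile_nonneg)
  have "wexp T \<delta> N (\<lambda>y. if L < of_int \<bar>y\<bar> then 1 else 0) =
          (\<Sum>y\<in>{-int N..int N}. (if L < of_int \<bar>y\<bar> then 1 else 0) * kernel T \<delta> N y)"
    by (rule wexp_kernel_decomp)
  also have "\<dots> \<le> (\<Sum>y\<in>{-int N..int N}. R ^ N * F (nat \<bar>y\<bar>))"
  proof (rule sum_mono)
    fix y :: int
    show "(if L < of_int \<bar>y\<bar> then 1 else 0) * kernel T \<delta> N y \<le> R ^ N * F (nat \<bar>y\<bar>)"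
    proof (cases "L < of_int \<bar>y\<bar>")
      case True
      then have "l < nat \<bar>y\<bar>" using assms by linarith
      then show ?thesis using True kernel_upper[of N y] by (simp add: R_def F_def upper_profile_def)
    qed (use R_nonneg F_nonneg in simp)
  qed
  also have "\<dots> = R ^ N * (\<Sum>y\<in>{-int N..int N}. F (nat \<bar>y\<bar>))"
    by (simp add: sum_distrib_left)
  also have "\<dots> \<le> R ^ N * (2 * (\<Sum>a\<le>N. F a))"
    using R_nonneg F_nonneg by (intro mult_left_mono sum_symmetric_interval_le) auto
  also have "\<dots> \<le> R ^ N * (2 * tail_constant p q \<sigma> l)"
    using R_nonneg decay_profile_tail_sum[of l N] by (intro mult_left_mono) (auto simp: F_def)
  finally show ?thesis by (simp add: R_def)
qed

text \<open>Tail estimate for the endpoint: the exponential rates of numerator and partition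
  function differ only by the factor (1 + contact_excess)^N.\<close>
lemma polymer_tail_bound:
  fixes L :: real
  assumes "real l \<le> L"
  shows "polymer_prob T N \<delta> (\<lambda>xs. \<bar>walk_pos xs N\<bar> > L) \<le>
           (1 + contact_excess T q s) ^ N * (\<rho> / q) * (2 * tail_constant p q \<sigma> l)"
proof -
  define A where "A = (2 * \<rho>) ^ N"
  have A_pos: "0 < A" using rho_pos by (simp add: A_def)
  have "polymer_prob T N \<delta> (\<lambda>xs. \<bar>walk_pos xs N\<bar> > L) =
          wexp T \<delta> N (\<lambda>y. if L < of_int \<bar>y\<bar> then 1 else 0) / wexp T \<delta> N (\<lambda>_. 1)"
    by (rule polymer_prob_eq_wexp)
  also have "\<dots> \<le> (A * (1 + contact_excess T q s) ^ N * (2 * tail_constant p q \<sigma> l)) /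
                   (A * (q / \<rho>))"
    using tail_wexp_bound[OF assms, of N] partition_lower[of N] A_pos rho_pos q_pos
      tail_constant_nonneg contact_excess_nonneg
    by (intro frac_le wexp_nonneg) (auto simp: A_def power_mult_distrib)
  also have "\<dots> = (1 + contact_excess T q s) ^ N * (\<rho> / q) * (2 * tail_constant p q \<sigma> l)"
    using A_pos rho_pos q_pos by (simp add: field_simps)
  finally show ?thesis .
qed

lemma polymer_tail_bound_small_excess:
  fixes L :: real
  assumes "real l \<le> L" and "real N * contact_excess T q s \<le> 1"
  shows "polymer_prob T N \<delta> (\<lambda>xs. \<bar>walk_pos xs N\<bar> > L) \<le>
           2 * exp 1 * (\<rho> / q) * tail_constant p q \<sigma> l"
proof -
  have growth: "(1 + contact_excess T q s) ^ N \<le> exp 1"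
    using one_plus_pow_le_exp[OF contact_excess_nonneg, of N] assms(2) by (simp add: order_trans)
  have "polymer_prob T N \<delta> (\<lambda>xs. \<bar>walk_pos xs N\<bar> > L) \<le>
          (1 + contact_excess T q s) ^ N * (\<rho> / q) * (2 * tail_constant p q \<sigma> l)"
    by (rule polymer_tail_bound[OF assms(1)])
  also have "\<dots> \<le> exp 1 * (\<rho> / q) * (2 * tail_constant p q \<sigma> l)"
    using growth rho_pos q_pos tail_constant_nonneg by (intro mult_right_mono) auto
  finally show ?thesis by (simp add: algebra_simps)
qed

end

lemma c_delta_pos:
  assumes "0 < \<delta>"
  shows "0 < c_delta \<delta>"
proof -
  have "exp (- \<delta>) < 1" using assms by simp
  then have "1 < sqrt (2 - exp (- \<delta>))" by simp
  then have "0 < ln (sqrt (2 - exp (- \<delta>)))" by (rule ln_gt_zero)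
  then show ?thesis using assms by (simp add: c_delta_def)
qed

lemma c_delta_decay_equation:
  assumes "0 < \<delta>"
  shows "exp \<delta> * exp (- c_delta \<delta>) = (exp (- c_delta \<delta>) + 1 / exp (- c_delta \<delta>)) / 2"
proof -
  define X where "X = 2 - exp (- \<delta>)"
  have "exp (- \<delta>) < 1" using assms by simp
  then have X_pos: "0 < X" unfolding X_def by linarith
  have "exp (\<delta> / 2) ^ 2 = exp \<delta>" by (simp add: power2_eq_square flip: exp_add)
  then have "exp (c_delta \<delta>) ^ 2 = exp \<delta> * X"
    using X_pos by (simp add: c_delta_def X_def exp_add power_mult_distrib)
  also have "\<dots> = 2 * exp \<delta> - 1" by (simp add: X_def algebra_simps exp_minus field_simps)
  finally show ?thesis by (simp add: exp_minus field_simps power2_eq_square)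
qed

lemma contact_excess_time_bound:
  fixes c s :: real
  assumes "0 < c" and "0 < s" and "2 \<le> T" and "1 \<le> N"
    and "ln ((s + 1/s) / (2 * exp (- c) ^ 2)) / c \<le> real T - ln (real N) / c"
  shows "real N * contact_excess T (exp (- c)) s \<le> 1"
proof -
  define D where "D = (s + 1/s) / (2 * exp (- c) ^ 2)"
  have D_pos: "0 < D" using assms(2) by (simp add: D_def add_pos_pos)
  have "ln D \<le> c * real T - ln (real N)"
    using assms(1,5) by (simp add: D_def field_simps)
  then have "exp (ln D + ln (real N)) \<le> exp (c * real T)" by simp
  then have "D * real N \<le> exp (c * real T)" using D_pos assms(4) by (simp add: exp_add)
  have "contact_excess T (exp (- c)) s = D * exp (- c) ^ T"
    using assms(3) by (simp add: contact_excess_def D_def power_diff field_simps)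
  then have "real N * contact_excess T (exp (- c)) s = (D * real N) * exp (- c * real T)"
    by (simp add: exp_of_nat_mult[symmetric] mult.commute)
  also have "\<dots> \<le> exp (c * real T) * exp (- c * real T)"
    using \<open>D * real N \<le> exp (c * real T)\<close> by (intro mult_right_mono) auto
  also have "\<dots> = 1" by (simp flip: exp_add)
  finally show ?thesis .
qed


lemma tail_constant_small:
  assumes "0 < p" and "p < 1" and "q < 1" and "0 < C" and "0 < \<epsilon>"
  shows "\<exists>\<sigma> l. 0 < \<sigma> \<and> \<sigma> < 1 \<and> C * tail_constant p q \<sigma> l \<le> \<epsilon>"
proof -
  define \<sigma> where "\<sigma> = min (1/2) (\<epsilon> * (1 - q) / (8 * C))"
  have \<sigma>_pos: "0 < \<sigma>" and \<sigma>_half: "\<sigma> \<le> 1/2"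
    using assms by (simp_all add: \<sigma>_def)
  have "(\<lambda>n. p ^ n) \<longlonglongrightarrow> 0" using assms(1,2) by (intro LIMSEQ_power_zero) simp
  moreover have "0 < \<epsilon> * (1 - p) / (2 * C)" using assms by simp
  ultimately obtain l where l: "p ^ l < \<epsilon> * (1 - p) / (2 * C)"
    using order_tendstoD(2) eventually_sequentially by (metis order.refl)
  have "C * (p ^ l / (1 - p)) \<le> \<epsilon> / 2"
    using l assms by (simp add: field_simps)
  moreover have "C * (\<sigma> / (1 - \<sigma>) * (2 / (1 - q))) \<le> \<epsilon> / 2"
  proof -
    have "\<sigma> / (1 - \<sigma>) \<le> 2 * \<sigma>" using \<sigma>_pos \<sigma>_half by (simp add: field_simps)
    then have "C * (\<sigma> / (1 - \<sigma>) * (2 / (1 - q))) \<le> C * (2 * \<sigma> * (2 / (1 - q)))"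
      using assms by (intro mult_left_mono mult_right_mono) auto
    also have "\<dots> \<le> C * (2 * (\<epsilon> * (1 - q) / (8 * C)) * (2 / (1 - q)))"
      using assms by (intro mult_left_mono mult_right_mono) (auto simp: \<sigma>_def)
    also have "\<dots> = \<epsilon> / 2" using assms by (simp add: field_simps)
    finally show ?thesis .
  qed
  moreover have "C * tail_constant p q \<sigma> l =
                   C * (p ^ l / (1 - p)) + C * (\<sigma> / (1 - \<sigma>) * (2 / (1 - q)))"
    by (simp only: tail_constant_def distrib_left)
  ultimately have "C * tail_constant p q \<sigma> l \<le> \<epsilon>" by linarith
  then show ?thesis using \<sigma>_pos \<sigma>_half by auto
qed

lemma polymer_tail_trivial:
  fixes L :: real
  assumes "real N < L"
  shows "polymer_prob T N \<delta> (\<lambda>xs. \<bar>walk_pos xs N\<bar> > L) = 0"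
proof -
  have no_path: "{xs \<in> srw_paths N. \<bar>walk_pos xs N\<bar> > L} = {}"
    using walk_pos_bound[of _ N] assms by fastforce
  show ?thesis unfolding polymer_prob_def no_path by simp
qed

lemma polymer_prob_nonneg: "0 \<le> polymer_prob T N \<delta> A"
  unfolding polymer_prob_def polymer_Z_def
  by (intro divide_nonneg_nonneg sum_nonneg) (auto intro: less_imp_le polymer_weight_pos)

lemma tendsto_sup_zero:
  fixes g :: "nat \<Rightarrow> real \<Rightarrow> real"
  assumes nonneg: "\<And>N L. 0 \<le> g N L"
    and uniform: "\<And>\<epsilon>. 0 < \<epsilon> \<Longrightarrow> \<exists>L0. \<forall>L\<ge>L0. \<forall>N. g N L \<le> \<epsilon>"
  shows "((\<lambda>L. SUP N. g N L) \<longlongrightarrow> 0) at_top"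
proof (rule tendstoI)
  fix \<epsilon> :: real assume "0 < \<epsilon>"
  then obtain L0 where L0: "\<And>L N. L0 \<le> L \<Longrightarrow> g N L \<le> \<epsilon> / 2"
    using uniform[of "\<epsilon> / 2"] by auto
  have "dist (SUP N. g N L) 0 < \<epsilon>" if "L0 \<le> L" for L
  proof -
    have "(SUP N. g N L) \<le> \<epsilon> / 2" using L0[OF that] by (intro cSUP_least) auto
    moreover have "bdd_above (range (\<lambda>N. g N L))"
      using L0[OF that] by (intro bdd_aboveI[where M = "\<epsilon> / 2"]) auto
    then have "0 \<le> (SUP N. g N L)"
      using nonneg by (intro cSUP_upper2[where x = 0]) auto
    ultimately show ?thesis using \<open>0 < \<epsilon>\<close> by (simp add: dist_real_def)
  qed
  then show "\<forall>\<^sub>F L in at_top. dist (SUP N. g N L) 0 < \<epsilon>"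
    unfolding eventually_at_top_linorder by blast
qed

text \<open>The main estimate: P(|S_N| > L) <= epsilon for all N once L is large.  For large N all
  hypotheses of tail_regime hold with T = T_N; small N are handled by polymer_tail_trivial.\<close>
lemma polymer_tail_uniform:
  fixes \<delta> \<epsilon> :: real and T :: "nat \<Rightarrow> nat"
  assumes "0 < \<delta>" and "filterlim T at_top sequentially"
    and "filterlim (\<lambda>N. real (T N) - ln (real N) / c_delta \<delta>) at_top sequentially"
    and "0 < \<epsilon>"
  shows "\<exists>L0. \<forall>L::real. L0 \<le> L \<longrightarrow>
           (\<forall>N. polymer_prob (T N) N \<delta> (\<lambda>xs. \<bar>walk_pos xs N\<bar> > L) \<le> \<epsilon>)"
proof -
  define c where "c = c_delta \<delta>"
  define p where "p = exp (- c / 2)"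
  define q where "q = exp (- c)"
  define \<rho> where "\<rho> = (q + 1/q) / 2"
  have c_pos: "0 < c" using c_delta_pos[OF assms(1)] by (simp add: c_def)
  have p: "0 < p" "p < 1" using c_pos by (simp_all add: p_def)
  have q_eq: "q = p ^ 2" by (simp add: p_def q_def power2_eq_square flip: exp_add)
  have q: "0 < q" "q < 1" using c_pos by (simp_all add: q_def)
  have exp_delta: "exp \<delta> * q = \<rho>"
    using c_delta_decay_equation[OF assms(1)] by (simp add: q_def \<rho>_def c_def)
  define C where "C = 2 * exp 1 * (\<rho> / q)"
  have C_pos: "0 < C" using q by (simp add: C_def \<rho>_def add_pos_pos)
  obtain \<sigma> l where \<sigma>: "0 < \<sigma>" "\<sigma> < 1" and small: "C * tail_constant p q \<sigma> l \<le> \<epsilon>"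
    using tail_constant_small[OF p q(2) C_pos assms(4)] by blast
  define s where "s = \<sigma> ^ 2"
  define R where "R = ln ((s + 1/s) / (2 * exp (- c) ^ 2)) / c"
  have "\<forall>\<^sub>F N in sequentially. 2 \<le> T N"
    using assms(2) by (simp add: filterlim_at_top)
  moreover have "\<forall>\<^sub>F N in sequentially. R \<le> real (T N) - ln (real N) / c"
    using assms(3) by (simp add: filterlim_at_top c_def)
  ultimately have "\<forall>\<^sub>F N in sequentially. 2 \<le> T N \<and> R \<le> real (T N) - ln (real N) / c"
    by (rule eventually_conj)
  then obtain N0 where N0: "\<And>N. N0 \<le> N \<Longrightarrow> 2 \<le> T N \<and> R \<le> real (T N) - ln (real N) / c"
    unfolding eventually_sequentially by blast
  show ?thesis
  proof (intro exI[of _ "max (real (max N0 1)) (real l)"] allI impI)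
    fix L N assume L: "max (real (max N0 1)) (real l) \<le> L"
    show "polymer_prob (T N) N \<delta> (\<lambda>xs. \<bar>walk_pos xs N\<bar> > L) \<le> \<epsilon>"
    proof (cases "N < max N0 1")
      case True
      then show ?thesis using L assms(4) polymer_tail_trivial[of N L] by simp
    next
      case False
      then have "2 \<le> T N" and time: "R \<le> real (T N) - ln (real N) / c" and "1 \<le> N"
        using N0 by auto
      interpret tail_regime "T N" q \<rho> \<delta> s p \<sigma>
        using \<open>2 \<le> T N\<close> p q q_eq \<sigma> exp_delta
        by unfold_locales (simp_all add: \<rho>_def s_def power_le_one)
      have "real N * contact_excess (T N) q s \<le> 1"
        using contact_excess_time_bound[OF c_pos _ \<open>2 \<le> T N\<close> \<open>1 \<le> N\<close>] s_pos time
        by (simp add: R_def q_def)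
      then have "polymer_prob (T N) N \<delta> (\<lambda>xs. \<bar>walk_pos xs N\<bar> > L) \<le> C * tail_constant p q \<sigma> l"
        using polymer_tail_bound_small_excess[of l L N] L by (simp add: C_def)
      then show ?thesis using small by linarith
    qed
  qed
qed

theorem theorem2:
  fixes \<delta> :: real and T :: "nat \<Rightarrow> nat"
  assumes "\<delta> > 0"
    and "\<And>N. even (T N)"
    and "\<And>N. T N \<le> N"
    and "filterlim T at_top sequentially"
    and "filterlim (\<lambda>N. real (T N) - ln (real N) / c_delta \<delta>) at_top sequentially"
  shows "((\<lambda>L::real. SUP N. polymer_prob (T N) N \<delta> (\<lambda>xs. \<bar>walk_pos xs N\<bar> > L))
           \<longlongrightarrow> 0) at_top"
  using polymer_prob_nonneg polymer_tail_uniform[OF assms(1,4,5)]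
  by (rule tendsto_sup_zero)

end
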